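(* Let $\rho$ be an odd prime with $\rho\equiv\pm5\pmod{12}$ and $\mathrm{ord}_\rho(3)=\rho-1$, let $m=\rho-1$, let $\alpha$ be a primitive element of $\mathrm{GF}(3^m)$, $\beta=\alpha^{(3^m-1)/(4\rho)}$ and $\theta=\beta^{-1}$. Let $\mathcal{C}(\rho)$ be the ternary negacyclic code of length $2\rho$ whose check polynomial is the minimal polynomial of $\beta$ over $\mathrm{GF}(3)$; equivalently $$\mathcal{C}(\rho)=\left\{\left(\mathrm{Tr}_{3^m/3}(a\theta^i)\right)_{i=0}^{2\rho-1}: a\in\mathrm{GF}(3^m)\right\}.$$ Let $\overline{\mathcal{C}}(\rho)=\{(\mathrm{Tr}_{3^m/3^2}(a\theta^{2i}))_{i=0}^{\rho-1}: a\in\mathrm{GF}(3^m)\}$ (a linear code over $\mathrm{GF}(9)$). Then $\mathcal{C}(\rho)$ has parameters $[2\rho,\rho-1,d]$ where $d\ge d(\overline{\mathcal{C}}(\rho))\ge\sqrt{\rho}+1$.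
   Context: A ternary negacyclic code of length $n$ is an ideal of $\mathrm{GF}(3)[x]/(x^n+1)$ (codewords $(c_0,\dots,c_{n-1})\leftrightarrow\sum c_ix^i$); its check polynomial is $(x^n+1)/g(x)$, where $g$ is its monic generator polynomial. $\mathrm{Tr}_{3^m/3^k}$ denotes the trace from $\mathrm{GF}(3^m)$ to $\mathrm{GF}(3^k)$. $d(\cdot)$ is the minimum Hamming distance; $[n,k,d]$ denotes length, dimension, minimum distance. *)

theory Defs
  imports "HOL-Number_Theory.Number_Theory"
begin

text \<open>Relative trace from GF(q^n) down to GF(q), written out explicitly:
  Tr(x) = x + x^q + ... + x^(q^(n-1)).  Used inside a field of order q^n
  (or a power of it, for the Frobenius sum).\<close>
definition ftrace :: "nat \<Rightarrow> nat \<Rightarrow> 'a::field \<Rightarrow> 'a" where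
  "ftrace q n x = (\<Sum>j<n. x ^ (q ^ j))"

definition primitive_element :: "'a::field \<Rightarrow> bool" where
  "primitive_element a \<longleftrightarrow> a \<noteq> 0 \<and> (\<forall>x. x \<noteq> 0 \<longrightarrow> (\<exists>k::nat. x = a ^ k))"

definition hamming_dist :: "'a list \<Rightarrow> 'a list \<Rightarrow> nat" where
  "hamming_dist x y = card {i. i < length x \<and> x ! i \<noteq> y ! i}"

definition min_distance :: "'a list set \<Rightarrow> nat" where
  "min_distance C = Min {hamming_dist c c' | c c'. c \<in> C \<and> c' \<in> C \<and> c \<noteq> c'}"

end

(*
  Let omega = -theta^2, a primitive rho-th root of unity, and let Tr9 be the trace from GF(3^m)
  to GF(9).  Since theta^(2i) = (-1)^i omega^i, the Cbar-codeword of a is, up to signs, the word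
  c(i) = sum_{j < m/2} a^(9^j) omega^(i 9^j) on Z/rho, and the 9^j run through the quadratic
  residues because 3 is a primitive root.  For such a word with c(0) <> 0, the twist
  d(i) = eta(i) c(1/i) by the Legendre symbol eta has a Fourier transform that vanishes at the
  non-residues and equals G c(0) at 0, where G is the quadratic Gauss sum (G^2 = +-rho, which is
  nonzero in characteristic 3); the dilate j -> d(3j) has transform vanishing at the residues.
  The product of the two transforms is therefore concentrated at 0, so the supports of d and of
  its dilate add up to all of Z/rho, and rho <= (wt c - 1)^2.  A translation makes c(0) <> 0 for
  any nonzero word.

  For C: theta^rho = iota lies in GF(9) with iota^2 = -1, and Tr = Tr9 + Tr9^3, so Tr9(y) <> 0
  forces Tr(y) <> 0 or Tr(iota y) <> 0; hence every nonzero codeword of C is at least as heavy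
  as some nonzero codeword of Cbar.  Finally a -> (Tr(a theta^i))_i is injective because the
  conjugates theta^(3^k), k < m, are distinct, so C has 3^m codewords.
*)

theory Submission
  imports Defs "HOL-Computational_Algebra.Polynomial"
begin

section \<open>Finite fields and traces\<close>

lemma CHAR_eq_if_card_eq_prime_power:
  assumes "card (UNIV :: 'a::{field,finite} set) = p ^ m" and "prime p"
  shows "CHAR('a) = p"
proof -
  have "prime CHAR('a)"
    by (intro prime_CHAR_semidom finite_imp_CHAR_pos) simp
  moreover have "CHAR('a) dvd p ^ m"
    using CHAR_dvd_CARD[where 'a = 'a] assms(1) by simp
  ultimately show ?thesis
    using assms(2) by (metis prime_dvd_power primes_dvd_imp_eq)
qed

lemma card_UNIV_field_ge_2: "2 \<le> card (UNIV :: 'a::{field,finite} set)"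
proof -
  have "card {0::'a, 1} \<le> card (UNIV :: 'a set)"
    by (rule card_mono) simp_all
  then show ?thesis
    by simp
qed

lemma finite_field_power_card_minus_1:
  fixes x :: "'a::{field,finite}"
  assumes "x \<noteq> 0"
  shows "x ^ (card (UNIV :: 'a set) - 1) = 1"
proof -
  let ?S = "UNIV - {0::'a}"
  have "(\<Prod>y\<in>?S. x * y) = (\<Prod>y\<in>?S. y)"
    by (rule prod.reindex_bij_witness[of _ "\<lambda>y. y / x" "\<lambda>y. x * y"]) (use assms in auto)
  moreover have "(\<Prod>y\<in>?S. x * y) = x ^ card ?S * (\<Prod>y\<in>?S. y)"
    by (simp add: prod.distrib)
  moreover have "(\<Prod>y\<in>?S. y) \<noteq> 0"
    by simp
  moreover have "card ?S = card (UNIV :: 'a set) - 1"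
    by (simp add: card_Diff_subset)
  ultimately show ?thesis
    by simp
qed

lemma power_mod_eq_if_power_eq_1:
  fixes a :: "'a::monoid_mult"
  assumes "a ^ n = 1"
  shows "a ^ (k mod n) = a ^ k"
proof -
  have "a ^ k = a ^ (n * (k div n) + k mod n)"
    by simp
  also have "\<dots> = (a ^ n) ^ (k div n) * a ^ (k mod n)"
    by (simp only: power_add power_mult)
  finally show ?thesis
    by (simp add: assms)
qed

lemma ftrace_add:
  fixes x y :: "'a::field"
  assumes "prime CHAR('a)" and "q = CHAR('a) ^ k"
  shows "ftrace q n (x + y) = ftrace q n x + ftrace q n y"
proof -
  have "(x + y) ^ (q ^ j) = x ^ (q ^ j) + y ^ (q ^ j)" for j
    using assms by (intro freshmans_dream'[where n = "k * j"]) (simp_all add: power_mult)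
  then show ?thesis
    by (simp add: ftrace_def sum.distrib)
qed

lemma ftrace_diff:
  fixes x y :: "'a::field"
  assumes "prime CHAR('a)" and "q = CHAR('a) ^ k"
  shows "ftrace q n (x - y) = ftrace q n x - ftrace q n y"
  using ftrace_add[OF assms, where x = "x - y" and y = y] by simp

lemma ftrace_mult_fixed:
  fixes l y :: "'a::field"
  assumes "l ^ q = l"
  shows "ftrace q n (l * y) = l * ftrace q n y"
proof -
  have "l ^ (q ^ j) = l" for j
    by (induction j) (simp_all add: power_mult assms)
  then show ?thesis
    by (simp add: ftrace_def power_mult_distrib sum_distrib_left)
qed

lemma ftrace_tower:
  fixes x :: "'a::field"
  assumes "prime CHAR('a)" and "q = CHAR('a) ^ e"
  shows "ftrace q (n * k) x = ftrace q k (ftrace (q ^ k) n x)"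
proof -
  have "ftrace q (n * k) x = (\<Sum>j<n. \<Sum>l\<in>{j * k..<j * k + k}. x ^ (q ^ l))"
    unfolding ftrace_def by (rule sum.nat_group[symmetric])
  also have "\<dots> = (\<Sum>j<n. \<Sum>i<k. (x ^ ((q ^ k) ^ j)) ^ (q ^ i))"
  proof (rule sum.cong[OF refl])
    fix j
    have "x ^ (q ^ (i + j * k)) = (x ^ ((q ^ k) ^ j)) ^ (q ^ i)" for i
      by (simp add: power_add power_mult[symmetric] mult.commute)
    then show "(\<Sum>l\<in>{j * k..<j * k + k}. x ^ (q ^ l)) = (\<Sum>i<k. (x ^ ((q ^ k) ^ j)) ^ (q ^ i))"
      using sum.shift_bounds_nat_ivl[of "\<lambda>l. x ^ (q ^ l)" 0 "j * k" k]
      by (simp add: atLeast0LessThan add.commute)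
  qed
  also have "\<dots> = (\<Sum>i<k. (\<Sum>j<n. x ^ ((q ^ k) ^ j)) ^ (q ^ i))"
    using assms by (subst sum.swap) (simp add: freshmans_dream_sum' power_mult[symmetric])
  also have "\<dots> = ftrace q k (ftrace (q ^ k) n x)"
    by (simp add: ftrace_def)
  finally show ?thesis .
qed

lemma primitive_element_power_eq_1_iff:
  fixes \<alpha> :: "'a::{field,finite}"
  assumes "primitive_element \<alpha>"
  shows "\<alpha> ^ n = 1 \<longleftrightarrow> (card (UNIV :: 'a set) - 1) dvd n"
proof
  let ?q = "card (UNIV :: 'a set) - 1"
  have "\<alpha> \<noteq> 0"
    using assms by (simp add: primitive_element_def)
  then have \<alpha>_q: "\<alpha> ^ ?q = 1"
    by (rule finite_field_power_card_minus_1)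
  show "?q dvd n" if "\<alpha> ^ n = 1"
  proof (rule ccontr)
    assume "\<not> ?q dvd n"
    then have r: "0 < n mod ?q" "n mod ?q < ?q"
      using card_UNIV_field_ge_2[where 'a = 'a] by (auto simp: dvd_eq_mod_eq_0 intro: Nat.gr0I)
    have "\<alpha> ^ (n mod ?q) = 1"
      using that power_mod_eq_if_power_eq_1[OF \<alpha>_q, of n] by simp
    have "UNIV - {0} \<subseteq> (\<lambda>j. \<alpha> ^ j) ` {..<n mod ?q}"
    proof
      fix x :: 'a assume "x \<in> UNIV - {0}"
      then obtain k where "x = \<alpha> ^ k"
        using assms by (auto simp: primitive_element_def)
      also have "\<dots> = \<alpha> ^ (k mod (n mod ?q))"
        using \<open>\<alpha> ^ (n mod ?q) = 1\<close> by (rule power_mod_eq_if_power_eq_1[symmetric])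
      finally show "x \<in> (\<lambda>j. \<alpha> ^ j) ` {..<n mod ?q}"
        using r by auto
    qed
    then have "card (UNIV - {0::'a}) \<le> card ((\<lambda>j. \<alpha> ^ j) ` {..<n mod ?q})"
      by (rule card_mono[rotated]) simp
    also have "\<dots> \<le> n mod ?q"
      using card_image_le[of "{..<n mod ?q}" "\<lambda>j. \<alpha> ^ j"] by simp
    also have "card (UNIV - {0::'a}) = ?q"
      by (simp add: card_Diff_subset)
    finally show False
      using r by simp
  qed
  show "\<alpha> ^ n = 1" if "?q dvd n"
    using that \<alpha>_q by (auto simp: power_mult)
qed

lemma primitive_element_power_power_eq_1_iff:
  fixes \<alpha> :: "'a::{field,finite}"
  assumes "primitive_element \<alpha>" and "card (UNIV :: 'a set) - 1 = k * N"
  shows "(\<alpha> ^ N) ^ n = 1 \<longleftrightarrow> k dvd n"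
proof -
  have "0 < N"
    using assms(2) card_UNIV_field_ge_2[where 'a = 'a] by (intro Nat.gr0I) simp
  have "(\<alpha> ^ N) ^ n = 1 \<longleftrightarrow> k * N dvd N * n"
    unfolding power_mult[symmetric] primitive_element_power_eq_1_iff[OF assms(1)] assms(2) ..
  also have "\<dots> \<longleftrightarrow> k dvd n"
    using \<open>0 < N\<close> by (simp add: mult.commute[of k])
  finally show ?thesis .
qed

lemma eq_0_if_ftrace_mult_powers_eq_0:
  fixes d t :: "'a::field"
  assumes vanish: "\<And>i. i < n \<Longrightarrow> ftrace q n (d * t ^ i) = 0"
    and distinct: "\<And>k. 0 < k \<Longrightarrow> k < n \<Longrightarrow> t ^ (q ^ k) \<noteq> t"
    and "0 < n"
  shows "d = 0"
proof -
  \<comment> \<open>Every conjugate \<open>t ^ (q ^ k)\<close> except \<open>t\<close> itself is a root of \<open>P\<close>, and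
    \<open>deg P < n\<close>, so the coefficients of \<open>P\<close> combine the vanishing traces into \<open>d * poly P t\<close>.\<close>
  define P where "P = (\<Prod>k\<in>{1..<n}. [:- (t ^ (q ^ k)), 1:])"
  have "degree P \<le> n - 1"
    unfolding P_def using degree_prod_sum_le[of "{1..<n}" "\<lambda>k. [:- (t ^ (q ^ k)), 1:]"] by simp
  have poly_P: "poly P x = (\<Prod>k\<in>{1..<n}. x - t ^ (q ^ k))" for x
    by (simp add: P_def poly_prod)
  have "(\<Sum>j<n. d ^ (q ^ j) * poly P (t ^ (q ^ j))) = d * poly P t"
  proof -
    have "{..<n} = insert 0 {1..<n}"
      using \<open>0 < n\<close> by auto
    moreover have "poly P (t ^ (q ^ j)) = 0" if "j \<in> {1..<n}" for j
      unfolding poly_P using that by (intro prod_zero) auto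
    ultimately show ?thesis
      by simp
  qed
  moreover have "(\<Sum>j<n. d ^ (q ^ j) * poly P (t ^ (q ^ j))) =
      (\<Sum>i\<le>degree P. coeff P i * (\<Sum>j<n. d ^ (q ^ j) * (t ^ (q ^ j)) ^ i))"
    by (simp add: poly_altdef sum_distrib_left ac_simps sum.swap[of _ "{..<n}"])
  moreover have "\<dots> = (\<Sum>i\<le>degree P. coeff P i * ftrace q n (d * t ^ i))"
    by (simp add: ftrace_def power_mult_distrib power_mult[symmetric] mult.commute)
  moreover have "\<dots> = 0"
    using vanish \<open>degree P \<le> n - 1\<close> \<open>0 < n\<close> by (intro sum.neutral) auto
  moreover have "t - t ^ (q ^ k) \<noteq> 0" if "k \<in> {1..<n}" for k
    using distinct[of k] that by auto
  then have "poly P t \<noteq> 0"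
    unfolding poly_P by (simp add: prod_zero_iff)
  ultimately show ?thesis
    by simp
qed

lemma hamming_dist_map_upt:
  "hamming_dist (map f [0..<n]) (map g [0..<n]) = card {i \<in> {..<n}. f i \<noteq> g i}"
  unfolding hamming_dist_def by (rule arg_cong[where f = card]) auto

lemma hamming_dist_eq_0_iff:
  assumes "length x = length y"
  shows "hamming_dist x y = 0 \<longleftrightarrow> x = y"
  using assms by (auto simp: hamming_dist_def list_eq_iff_nth_eq)

lemma finite_hamming_distances:
  assumes "finite C"
  shows "finite {hamming_dist c c' | c c'. c \<in> C \<and> c' \<in> C \<and> c \<noteq> c'}"
proof (rule finite_subset)
  show "{hamming_dist c c' | c c'. c \<in> C \<and> c' \<in> C \<and> c \<noteq> c'} \<subseteq>
      (\<lambda>(c, c'). hamming_dist c c') ` (C \<times> C)"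
    by auto
qed (use assms in simp)

lemma min_distance_le:
  assumes "finite C" and "c \<in> C" and "c' \<in> C" and "c \<noteq> c'"
  shows "min_distance C \<le> hamming_dist c c'"
proof -
  have "finite {hamming_dist c c' | c c'. c \<in> C \<and> c' \<in> C \<and> c \<noteq> c'}"
    using assms(1) by (rule finite_hamming_distances)
  with assms show ?thesis
    unfolding min_distance_def by (intro Min_le) auto
qed

lemma min_distance_attained:
  assumes "finite C" and "c \<in> C" and "c' \<in> C" and "c \<noteq> c'"
  obtains d d' where "d \<in> C" "d' \<in> C" "d \<noteq> d'" "min_distance C = hamming_dist d d'"
proof -
  have "finite {hamming_dist c c' | c c'. c \<in> C \<and> c' \<in> C \<and> c \<noteq> c'}"
    using assms(1) by (rule finite_hamming_distances)
  with assms have "min_distance C \<in> {hamming_dist c c' | c c'. c \<in> C \<and> c' \<in> C \<and> c \<noteq> c'}"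
    unfolding min_distance_def by (intro Min_in) auto
  then show ?thesis
    using that by blast
qed

lemma bij_betw_mult_mod:
  fixes a n :: nat
  assumes "coprime a n" and "0 < n"
  shows "bij_betw (\<lambda>j. a * j mod n) {..<n} {..<n}"
proof -
  have "inj_on (\<lambda>j. a * j mod n) {..<n}"
  proof (rule inj_onI)
    fix x y assume "x \<in> {..<n}" "y \<in> {..<n}" and "a * x mod n = a * y mod n"
    then have "[x = y] (mod n)"
      using cong_mult_lcancel_nat[OF assms(1)] by (simp add: cong_def)
    with \<open>x \<in> {..<n}\<close> \<open>y \<in> {..<n}\<close> show "x = y"
      by (simp add: cong_def)
  qed
  then show ?thesis
    using assms(2) by (intro bij_betw_imageI endo_inj_surj) auto
qed

lemma bij_betw_add_mod:
  fixes k n :: nat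
  assumes "0 < n"
  shows "bij_betw (\<lambda>i. (i + k) mod n) {..<n} {..<n}"
proof -
  have "inj_on (\<lambda>i. (i + k) mod n) {..<n}"
  proof (rule inj_onI)
    fix x y assume "x \<in> {..<n}" "y \<in> {..<n}" and "(x + k) mod n = (y + k) mod n"
    then have "[x = y] (mod n)"
      by (simp add: cong_def[symmetric] cong_add_rcancel_nat)
    with \<open>x \<in> {..<n}\<close> \<open>y \<in> {..<n}\<close> show "x = y"
      by (simp add: cong_def)
  qed
  then show ?thesis
    using assms by (intro bij_betw_imageI endo_inj_surj) auto
qed

lemma card_filter_bij_betw:
  assumes "bij_betw f X Y"
  shows "card {y \<in> Y. Q y} = card {x \<in> X. Q (f x)}"
proof -
  have "{y \<in> Y. Q y} = f ` {x \<in> X. Q (f x)}"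
    using assms by (auto simp: bij_betw_def)
  moreover have "inj_on f {x \<in> X. Q (f x)}"
    using assms by (auto simp: bij_betw_def inj_on_def)
  ultimately show ?thesis
    by (simp add: card_image)
qed

lemma sum_periodic_reindex:
  fixes f :: "int \<Rightarrow> 'b::comm_monoid_add"
  assumes periodic: "\<And>x. f (x mod int n) = f x"
    and inj: "inj_on (\<lambda>e. \<phi> e mod int n) {..<n}"
  shows "(\<Sum>e<n. f (\<phi> e)) = (\<Sum>e<n. f (int e))"
proof (cases "n = 0")
  case False
  have "inj_on (\<lambda>e. nat (\<phi> e mod int n)) {..<n}"
    using inj False by (auto simp: inj_on_def eq_nat_nat_iff)
  then have "bij_betw (\<lambda>e. nat (\<phi> e mod int n)) {..<n} {..<n}"
    using False by (intro bij_betw_imageI endo_inj_surj) (auto simp: nat_less_iff)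
  then have "(\<Sum>e<n. f (int (nat (\<phi> e mod int n)))) = (\<Sum>e<n. f (int e))"
    by (rule sum.reindex_bij_betw)
  then show ?thesis
    using False by (simp add: periodic)
qed simp

lemma sum_periodic_shift:
  fixes f :: "int \<Rightarrow> 'b::comm_monoid_add"
  assumes "\<And>x. f (x mod int n) = f x"
  shows "(\<Sum>e<n. f (c + int e)) = (\<Sum>e<n. f (int e))"
proof (rule sum_periodic_reindex[of f n, OF assms], rule inj_onI)
  fix x y assume "x \<in> {..<n}" "y \<in> {..<n}" "(c + int x) mod int n = (c + int y) mod int n"
  then show "x = y"
    by (simp add: cong_def[symmetric] cong_add_lcancel) (simp add: cong_def)
qed

lemma sum_periodic_reflect:
  fixes f :: "int \<Rightarrow> 'b::comm_monoid_add"
  assumes "\<And>x. f (x mod int n) = f x"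
  shows "(\<Sum>e<n. f (c - int e)) = (\<Sum>e<n. f (int e))"
proof (rule sum_periodic_reindex[of f n, OF assms], rule inj_onI)
  fix x y assume "x \<in> {..<n}" "y \<in> {..<n}" "(c - int x) mod int n = (c - int y) mod int n"
  then have "int n dvd int y - int x"
    by (simp add: mod_eq_dvd_iff)
  then have "int y mod int n = int x mod int n"
    by (simp add: mod_eq_dvd_iff)
  with \<open>x \<in> {..<n}\<close> \<open>y \<in> {..<n}\<close> show "x = y"
    by simp
qed

lemma card_periodic_reflect:
  assumes "\<And>x. Q (x mod int n) = Q x"
  shows "card {e \<in> {..<n}. Q (c - int e)} = card {e \<in> {..<n}. Q (int e)}"
proof -
  have "card {e \<in> {..<n}. Q (\<phi> e)} = (\<Sum>e<n. if Q (\<phi> e) then 1 else 0)" for \<phi>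
    unfolding card_eq_sum by (rule sum.inter_filter) simp
  then show ?thesis
    using sum_periodic_reflect[of "\<lambda>x. if Q x then 1 else 0 :: nat" n c] assms by simp
qed

section \<open>Primitive roots modulo an odd prime\<close>

locale odd_prime_primitive_root =
  fixes p g :: nat
  assumes prime: "prime p" and odd: "odd p" and ord_eq: "ord p g = p - 1"
begin

definition half :: nat where "half = (p - 1) div 2"

lemma p_ge_3: "p \<ge> 3"
  using prime odd prime_ge_2_nat[OF prime] by (cases "p = 2") auto

lemma p_minus_1_eq: "p - 1 = 2 * half"
  using odd p_ge_3 by (simp add: half_def)

lemma half_pos: "0 < half"
  using p_ge_3 p_minus_1_eq by simp

lemma half_less: "half < p - 1"
  using half_pos p_minus_1_eq by simp

lemma coprime: "coprime p g"
  using ord_eq p_ge_3 ord_gt_0_iff[of p g] by simp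

lemma residue_primroot: "residue_primroot p g"
  using coprime ord_eq prime p_ge_3 by (simp add: residue_primroot_def totient_prime)

lemma bij_betw_power_mod: "bij_betw (\<lambda>e. g ^ e mod p) {..<p - 1} {0<..<p}"
  using residue_primroot_is_generator[OF _ residue_primroot] p_ge_3 prime
  by (simp add: totient_prime totatives_prime)

lemma power_mod_eq_iff: "g ^ d mod p = g ^ e mod p \<longleftrightarrow> d mod (p - 1) = e mod (p - 1)"
  using order_divides_expdiff[OF coprime, of d e] by (simp add: ord_eq cong_def)

lemma power_mod_pos: "0 < g ^ e mod p"
proof -
  have "g ^ (e mod (p - 1)) mod p \<in> {0<..<p}"
    using bij_betw_power_mod p_ge_3 by (auto simp: bij_betw_def)
  moreover have "g ^ (e mod (p - 1)) mod p = g ^ e mod p"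
    by (simp only: power_mod_eq_iff mod_mod_trivial)
  ultimately show ?thesis
    by simp
qed

lemma power_half_dvd: "p dvd g ^ half + 1"
proof -
  have "g > 0"
    using coprime p_ge_3 by (intro Nat.gr0I) auto
  have "[g ^ (p - 1) = 1] (mod p)"
    using ord[of g p] coprime ord_eq by simp
  then have "[g ^ half * g ^ half = 1] (mod p)"
    unfolding p_minus_1_eq by (simp add: power_add[symmetric] mult_2)
  then have "[int (g ^ half) * int (g ^ half) = 1] (mod int p)"
    by (simp add: cong_int_iff[symmetric])
  then have "[int (g ^ half) = 1] (mod int p) \<or> [int (g ^ half) = - 1] (mod int p)"
    using prime \<open>g > 0\<close> by (intro cong_square) auto
  moreover have "\<not> [g ^ half = 1] (mod p)"
    using ord_minimal[of half p g] half_pos half_less ord_eq by simp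
  ultimately have "[int (g ^ half) = - 1] (mod int p)"
    by (auto simp: cong_int_iff[symmetric])
  then have "int p dvd int (g ^ half + 1)"
    by (simp add: cong_iff_dvd_diff add.commute)
  then show ?thesis
    by (simp only: int_dvd_int_iff)
qed

lemma dvd_power_plus_1_iff:
  assumes "t < p - 1"
  shows "p dvd g ^ t + 1 \<longleftrightarrow> t = half"
proof -
  have "p dvd g ^ t + 1 \<longleftrightarrow> [g ^ t + 1 = g ^ half + 1] (mod p)"
    using power_half_dvd by (simp add: cong_def dvd_eq_mod_eq_0)
  also have "\<dots> \<longleftrightarrow> t mod (p - 1) = half mod (p - 1)"
    by (simp only: cong_add_rcancel_nat) (simp add: cong_def power_mod_eq_iff)
  also have "\<dots> \<longleftrightarrow> t = half"
    using assms half_less by simp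
  finally show ?thesis .
qed

lemma mult_power_p_minus_2_cong: "[g * g ^ (p - 2) = 1] (mod p)"
proof -
  have "g * g ^ (p - 2) = g ^ (p - 1)"
    using p_ge_3 by (simp flip: power_Suc) (simp add: numeral_2_eq_2 Suc_diff_Suc)
  then show ?thesis
    using ord[of g p] coprime ord_eq by simp
qed

definition dlog :: "nat \<Rightarrow> nat" where
  "dlog = inv_into {..<p - 1} (\<lambda>e. g ^ e mod p)"

lemma dlog_power_mod: "e < p - 1 \<Longrightarrow> dlog (g ^ e mod p) = e"
  unfolding dlog_def using bij_betw_power_mod by (auto simp: bij_betw_def intro: inv_into_f_f)

lemma four_mul_dvd_power_minus_1:
  assumes "odd g"
  shows "4 * p dvd g ^ (p - 1) - 1"
proof -
  have "[g ^ (p - 1) = 1] (mod p)"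
    using ord[of g p] coprime ord_eq by simp
  then have "p dvd g ^ (p - 1) - 1"
    by (rule cong_to_1_nat)
  have "[g ^ 2 = 1] (mod 4)"
    using assms by (auto simp: cong_def power2_eq_square elim!: oddE)
  then have "[(g ^ 2) ^ half = 1] (mod 4)"
    using cong_pow by fastforce
  then have "4 dvd g ^ (p - 1) - 1"
    unfolding p_minus_1_eq power_mult by (rule cong_to_1_nat)
  moreover have "coprime ((2::nat) ^ 2) p"
    using odd by (simp only: coprime_power_left_iff coprime_left_2_iff_odd) simp
  ultimately show ?thesis
    using \<open>p dvd g ^ (p - 1) - 1\<close> by (simp add: divides_mult)
qed

end

section \<open>Fourier transform at a root of unity of prime order\<close>

locale prime_root_of_unity =
  fixes p :: nat and \<omega> :: "'a::field"
  assumes prime_order: "prime p" and power_p: "\<omega> ^ p = 1" and neq_1: "\<omega> \<noteq> 1"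
begin

lemma power_mod: "\<omega> ^ (k mod p) = \<omega> ^ k"
  using power_p by (rule power_mod_eq_if_power_eq_1)

lemma power_eq_if_mod_eq: "k mod p = l mod p \<Longrightarrow> \<omega> ^ k = \<omega> ^ l"
  by (metis power_mod)

lemma power_eq_1_iff: "\<omega> ^ k = 1 \<longleftrightarrow> p dvd k"
proof
  assume "p dvd k"
  then show "\<omega> ^ k = 1"
    by (auto simp: power_mult power_p)
next
  assume k: "\<omega> ^ k = 1"
  show "p dvd k"
  proof (rule ccontr)
    assume "\<not> p dvd k"
    then have "[(k mod p) ^ (p - 1) = 1] (mod p)"
      using fermat_theorem[OF prime_order] by (simp add: dvd_eq_mod_eq_0)
    then have "(k mod p * (k mod p) ^ (p - 2)) mod p = 1 mod p"
      using prime_ge_2_nat[OF prime_order]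
      by (simp add: cong_def power_Suc[symmetric] Suc_diff_Suc numeral_2_eq_2)
    then have "\<omega> ^ (k mod p * (k mod p) ^ (p - 2)) = \<omega> ^ 1"
      by (rule power_eq_if_mod_eq)
    then show False
      using k neq_1 by (simp add: power_mult power_mod)
  qed
qed

lemma sum_powers: "(\<Sum>s<p. \<omega> ^ (k * s)) = (if p dvd k then of_nat p else 0)"
proof (cases "p dvd k")
  case True
  then have "\<omega> ^ k = 1"
    by (simp add: power_eq_1_iff)
  with True show ?thesis
    by (simp add: power_mult)
next
  case False
  then have "\<omega> ^ k \<noteq> 1"
    by (simp add: power_eq_1_iff)
  moreover have "(\<omega> ^ k) ^ p = (\<omega> ^ p) ^ k"
    by (simp only: power_mult[symmetric] mult.commute)
  ultimately show ?thesis
    using False by (simp add: power_mult sum_gp_strict power_p)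
qed

definition dft :: "(nat \<Rightarrow> 'a) \<Rightarrow> nat \<Rightarrow> 'a" where
  "dft f s = (\<Sum>i<p. f i * \<omega> ^ (i * s))"

lemma dft_mod: "dft f (s mod p) = dft f s"
proof -
  have "\<omega> ^ (i * (s mod p)) = \<omega> ^ (i * s)" for i
    by (rule power_eq_if_mod_eq) (simp add: mod_mult_right_eq)
  then show ?thesis
    by (simp add: dft_def)
qed

lemma dft_dilate:
  assumes "[a * a' = 1] (mod p)"
  shows "dft (\<lambda>j. f (a * j mod p)) s = dft f (a' * s)"
proof -
  have "coprime a p"
    using assms by (auto simp: coprime_iff_invertible_nat)
  then have "bij_betw (\<lambda>j. a * j mod p) {..<p} {..<p}"
    using prime_gt_0_nat[OF prime_order] by (rule bij_betw_mult_mod)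
  moreover have "\<omega> ^ (j * s) = \<omega> ^ ((a * j mod p) * (a' * s))" for j
  proof (rule power_eq_if_mod_eq)
    have "(a * j mod p) * (a' * s) mod p = (a * j) * (a' * s) mod p"
      by (rule mod_mult_left_eq)
    also have "(a * j) * (a' * s) = (a * a') * (j * s)"
      by (simp only: ac_simps)
    also have "(a * a') * (j * s) mod p = 1 * (j * s) mod p"
      using cong_scalar_right[OF assms, of "j * s"] unfolding cong_def .
    finally have "(a * j mod p) * (a' * s) mod p = j * s mod p"
      by (simp only: mult_1_left)
    then show "j * s mod p = (a * j mod p) * (a' * s) mod p"
      by (rule sym)
  qed
  ultimately show ?thesis
    unfolding dft_def using sum.reindex_bij_betw[of "\<lambda>j. a * j mod p" "{..<p}" "{..<p}"
        "\<lambda>i. f i * \<omega> ^ (i * (a' * s))"] by simp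
qed

lemma sum_dft_mult_dft:
  "(\<Sum>s<p. dft f s * dft g s * \<omega> ^ (s * (p - k))) =
     (\<Sum>i<p. \<Sum>j<p. f i * g j * (if p dvd i + j + (p - k) then of_nat p else 0))"
proof -
  have "(i + j + (p - k)) * s = i * s + j * s + s * (p - k)" for i j s
    by (simp add: algebra_simps)
  then have term_eq: "f i * \<omega> ^ (i * s) * (g j * \<omega> ^ (j * s)) * \<omega> ^ (s * (p - k)) =
      f i * g j * \<omega> ^ ((i + j + (p - k)) * s)" for i j s
    by (simp add: power_add ac_simps)
  have "dft f s * dft g s * \<omega> ^ (s * (p - k)) =
      (\<Sum>i<p. \<Sum>j<p. f i * g j * \<omega> ^ ((i + j + (p - k)) * s))" for s
  proof -
    have "dft f s * dft g s = (\<Sum>i<p. \<Sum>j<p. f i * \<omega> ^ (i * s) * (g j * \<omega> ^ (j * s)))"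
      unfolding dft_def by (rule sum_product)
    then show ?thesis
      by (simp only: sum_distrib_right term_eq)
  qed
  then have "(\<Sum>s<p. dft f s * dft g s * \<omega> ^ (s * (p - k))) =
      (\<Sum>s<p. \<Sum>i<p. \<Sum>j<p. f i * g j * \<omega> ^ ((i + j + (p - k)) * s))"
    by simp
  also have "\<dots> = (\<Sum>i<p. \<Sum>s<p. \<Sum>j<p. f i * g j * \<omega> ^ ((i + j + (p - k)) * s))"
    by (rule sum.swap)
  also have "\<dots> = (\<Sum>i<p. \<Sum>j<p. \<Sum>s<p. f i * g j * \<omega> ^ ((i + j + (p - k)) * s))"
    by (rule sum.cong[OF refl]) (rule sum.swap)
  also have "\<dots> = (\<Sum>i<p. \<Sum>j<p. f i * g j * (if p dvd i + j + (p - k) then of_nat p else 0))"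
    by (simp add: sum_distrib_left[symmetric] sum_powers)
  finally show ?thesis .
qed

lemma sumset_of_supports_covers:
  assumes vanish: "\<And>s. 0 < s \<Longrightarrow> s < p \<Longrightarrow> dft f s * dft g s = 0"
    and nonzero: "dft f 0 * dft g 0 \<noteq> 0" and "k < p"
  shows "\<exists>i<p. \<exists>j<p. f i \<noteq> 0 \<and> g j \<noteq> 0 \<and> (i + j) mod p = k"
proof (rule ccontr)
  assume none: "\<not> ?thesis"
  have "f i * g j * (if p dvd i + j + (p - k) then of_nat p else 0) = 0"
    if "i \<in> {..<p}" "j \<in> {..<p}" for i j
  proof (cases "p dvd i + j + (p - k)")
    case True
    have "(i + j + (p - k) + k) mod p = ((i + j + (p - k)) mod p + k) mod p"
      by (rule mod_add_left_eq[symmetric])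
    also have "\<dots> = k"
      using True \<open>k < p\<close> by simp
    also have "i + j + (p - k) + k = i + j + p"
      using \<open>k < p\<close> by simp
    finally have "(i + j) mod p = k"
      by simp
    then show ?thesis
      using none that by auto
  qed simp
  then have "(\<Sum>s<p. dft f s * dft g s * \<omega> ^ (s * (p - k))) = 0"
    unfolding sum_dft_mult_dft by (intro sum.neutral ballI)
  moreover have "(\<Sum>s<p. dft f s * dft g s * \<omega> ^ (s * (p - k))) = dft f 0 * dft g 0"
  proof -
    have "(\<Sum>s\<in>{..<p} - {0}. dft f s * dft g s * \<omega> ^ (s * (p - k))) = 0"
      using vanish by (intro sum.neutral) auto
    then show ?thesis
      using prime_gt_0_nat[OF prime_order] by (simp add: sum.remove[of "{..<p}" 0])
  qed
  ultimately show False
    using nonzero by simp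
qed

lemma card_supports_mult_ge:
  assumes "\<And>s. 0 < s \<Longrightarrow> s < p \<Longrightarrow> dft f s * dft g s = 0"
    and "dft f 0 * dft g 0 \<noteq> 0"
  shows "p \<le> card {i \<in> {..<p}. f i \<noteq> 0} * card {j \<in> {..<p}. g j \<noteq> 0}"
proof -
  let ?A = "{i \<in> {..<p}. f i \<noteq> 0}" and ?B = "{j \<in> {..<p}. g j \<noteq> 0}"
  have "{..<p} \<subseteq> (\<lambda>(i, j). (i + j) mod p) ` (?A \<times> ?B)"
  proof
    fix k assume "k \<in> {..<p}"
    then obtain i j where "i < p" "j < p" "f i \<noteq> 0" "g j \<noteq> 0" "(i + j) mod p = k"
      using sumset_of_supports_covers[OF assms] by blast
    then show "k \<in> (\<lambda>(i, j). (i + j) mod p) ` (?A \<times> ?B)"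
      by force
  qed
  then have "card {..<p} \<le> card ((\<lambda>(i, j). (i + j) mod p) ` (?A \<times> ?B))"
    by (rule card_mono[rotated]) simp
  also have "\<dots> \<le> card (?A \<times> ?B)"
    by (rule card_image_le) simp
  finally show ?thesis
    by (simp add: card_cartesian_product)
qed

end

section \<open>Gauss sums and the square-root bound\<close>

definition parity_sign :: "int \<Rightarrow> 'a::ring_1" where
  "parity_sign e = (if even e then 1 else - 1)"

lemma parity_sign_add: "parity_sign (x + y) = parity_sign x * parity_sign y"
  by (auto simp: parity_sign_def)

lemma parity_sign_diff: "parity_sign (x - y) = parity_sign x * parity_sign y"
  by (auto simp: parity_sign_def)

lemma parity_sign_mult_self: "parity_sign x * parity_sign x = 1"
  by (auto simp: parity_sign_def)

lemma parity_sign_mod: "even n \<Longrightarrow> parity_sign (x mod n) = parity_sign x"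
  unfolding parity_sign_def by (metis dvd_mod_iff)

lemma sum_parity_sign_even: "(\<Sum>e<2 * k. parity_sign (int e)) = (0::'a::ring_1)"
  by (induction k) (simp_all add: lessThan_Suc parity_sign_def)

locale qr_words = prime_root_of_unity p \<omega> + odd_prime_primitive_root p g
  for p g :: nat and \<omega> :: "'a::field" +
  assumes two_neq_0: "(2::'a) \<noteq> 0" and of_nat_p_neq_0: "(of_nat p :: 'a) \<noteq> 0"
begin

definition root_exp :: "int \<Rightarrow> 'a" where
  "root_exp x = \<omega> ^ (g ^ nat (x mod int (p - 1)))"

lemma root_exp_mod: "root_exp (x mod int (p - 1)) = root_exp x"
  by (simp add: root_exp_def)

lemma root_exp_mod_add: "root_exp (x mod int (p - 1) + y) = root_exp (x + y)"
  by (metis mod_add_left_eq root_exp_mod)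

lemma root_exp_of_nat: "root_exp (int e) = \<omega> ^ (g ^ e)"
proof -
  have "\<omega> ^ (g ^ (e mod (p - 1))) = \<omega> ^ (g ^ e)"
    by (rule power_eq_if_mod_eq) (simp add: power_mod_eq_iff)
  moreover have "nat (int e mod int (p - 1)) = e mod (p - 1)"
    by (simp only: of_nat_mod[symmetric] nat_int)
  ultimately show ?thesis
    by (simp only: root_exp_def)
qed

lemma power_power_mod_mult: "\<omega> ^ ((g ^ e mod p) * k) = \<omega> ^ (g ^ e * k)"
  by (rule power_eq_if_mod_eq) (simp add: mod_mult_left_eq)

lemma root_exp_add: "\<omega> ^ ((g ^ e mod p) * g ^ u) = root_exp (int e + int u)"
  by (simp add: power_power_mod_mult root_exp_of_nat[of "e + u", simplified] power_add)

definition gauss_sum :: 'a where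
  "gauss_sum = (\<Sum>e<p - 1. parity_sign (int e) * root_exp (int e))"

lemma sum_root_exp_mult_shift:
  assumes "t < p - 1"
  shows "(\<Sum>e<p - 1. root_exp (int e) * root_exp (int e + int t)) =
    (if t = half then of_nat p - 1 else - 1)"
proof -
  have "root_exp (int e) * root_exp (int e + int t) = \<omega> ^ (g ^ e * (g ^ t + 1))" for e
    using root_exp_of_nat[of e] root_exp_of_nat[of "e + t"] by (simp add: power_add algebra_simps)
  then have "root_exp (int e) * root_exp (int e + int t) = \<omega> ^ ((g ^ e mod p) * (g ^ t + 1))" for e
    by (simp only: power_power_mod_mult)
  then have "(\<Sum>e<p - 1. root_exp (int e) * root_exp (int e + int t)) =
      (\<Sum>e<p - 1. \<omega> ^ ((g ^ e mod p) * (g ^ t + 1)))"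
    by simp
  also have "\<dots> = (\<Sum>k\<in>{0<..<p}. \<omega> ^ (k * (g ^ t + 1)))"
    by (rule sum.reindex_bij_betw[OF bij_betw_power_mod])
  also have "\<dots> = (\<Sum>k<p. \<omega> ^ ((g ^ t + 1) * k)) - 1"
  proof -
    have "{..<p} = insert 0 {0<..<p}"
      using p_ge_3 by auto
    then show ?thesis
      by (simp add: mult.commute)
  qed
  also have "\<dots> = (if t = half then of_nat p - 1 else - 1)"
    unfolding sum_powers using dvd_power_plus_1_iff[OF assms] by simp
  finally show ?thesis .
qed

lemma parity_sign_mod_p_minus_1: "parity_sign (x mod int (p - 1)) = parity_sign x"
  using p_minus_1_eq by (intro parity_sign_mod) simp

lemma gauss_sum_square: "gauss_sum * gauss_sum = parity_sign (int half) * of_nat p"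
proof -
  let ?f = "\<lambda>x. parity_sign x * root_exp x"
  have periodic: "?f (x mod int (p - 1)) = ?f x" for x
    by (simp only: parity_sign_mod_p_minus_1 root_exp_mod)
  have "gauss_sum * gauss_sum = (\<Sum>e<p - 1. ?f (int e) * (\<Sum>t<p - 1. ?f (int e + int t)))"
    unfolding gauss_sum_def sum_distrib_right
    by (simp only: sum_periodic_shift[of ?f, OF periodic])
  also have "\<dots> = (\<Sum>e<p - 1. \<Sum>t<p - 1. parity_sign (int t) * (root_exp (int e) * root_exp (int e + int t)))"
  proof -
    have "?f (int e) * ?f (int e + int t) =
        (parity_sign (int e) * parity_sign (int e)) * parity_sign (int t) * (root_exp (int e) * root_exp (int e + int t))"
      for e t by (simp add: parity_sign_add ac_simps)
    then have "?f (int e) * ?f (int e + int t) = parity_sign (int t) * (root_exp (int e) * root_exp (int e + int t))"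
      for e t by (simp only: parity_sign_mult_self mult_1_left)
    then show ?thesis
      by (simp only: sum_distrib_left)
  qed
  also have "\<dots> = (\<Sum>t<p - 1. parity_sign (int t) * (\<Sum>e<p - 1. root_exp (int e) * root_exp (int e + int t)))"
    by (subst sum.swap) (simp add: sum_distrib_left)
  also have "\<dots> = (\<Sum>t<p - 1. parity_sign (int t) * (if t = half then of_nat p else 0) - parity_sign (int t))"
  proof (rule sum.cong[OF refl])
    fix t assume "t \<in> {..<p - 1}"
    then show "parity_sign (int t) * (\<Sum>e<p - 1. root_exp (int e) * root_exp (int e + int t)) =
        parity_sign (int t) * (if t = half then of_nat p else 0) - parity_sign (int t)"
      using sum_root_exp_mult_shift[of t] by (simp add: algebra_simps)
  qed
  also have "\<dots> = (\<Sum>t<p - 1. if t = half then parity_sign (int t) * of_nat p else 0) -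
      (\<Sum>t<p - 1. parity_sign (int t))"
    by (simp only: sum_subtractf mult_zero_right if_distrib[of "(*) _"])
  also have "(\<Sum>t<p - 1. parity_sign (int t)) = (0::'a)"
    unfolding p_minus_1_eq by (rule sum_parity_sign_even)
  finally show ?thesis
    using half_less by simp
qed

lemma gauss_sum_neq_0: "gauss_sum \<noteq> 0"
  using gauss_sum_square of_nat_p_neq_0 by (auto simp: parity_sign_def split: if_splits)

(* The exponents g^(2j), j < half, run through the quadratic residues modulo p. *)
definition qr_word :: "(nat \<Rightarrow> 'a) \<Rightarrow> nat \<Rightarrow> 'a" where
  "qr_word b i = (\<Sum>j<half. b j * \<omega> ^ (i * g ^ (2 * j)))"

definition qr_word_log :: "(nat \<Rightarrow> 'a) \<Rightarrow> int \<Rightarrow> 'a" where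
  "qr_word_log b x = (\<Sum>j<half. b j * root_exp (x + 2 * int j))"

lemma qr_word_mod: "qr_word b (i mod p) = qr_word b i"
proof -
  have "\<omega> ^ ((i mod p) * g ^ (2 * j)) = \<omega> ^ (i * g ^ (2 * j))" for j
    by (rule power_eq_if_mod_eq) (simp add: mod_mult_left_eq)
  then show ?thesis
    by (simp add: qr_word_def)
qed

lemma qr_word_power_mod: "qr_word b (g ^ e mod p) = qr_word_log b (int e)"
  using root_exp_add[of e "2 * _"] by (simp add: qr_word_def qr_word_log_def)

lemma qr_word_log_mod: "qr_word_log b (x mod int (p - 1)) = qr_word_log b x"
  by (simp only: qr_word_log_def root_exp_mod_add)

(* For i = g^e this is the Legendre symbol (-1)^e of i times the word at 1/i = g^(-e). *)
definition twisted_qr_word :: "(nat \<Rightarrow> 'a) \<Rightarrow> nat \<Rightarrow> 'a" where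
  "twisted_qr_word b i =
     (if i = 0 then 0 else parity_sign (int (dlog i)) * qr_word_log b (- int (dlog i)))"

lemma twisted_qr_word_power_mod:
  "e < p - 1 \<Longrightarrow> twisted_qr_word b (g ^ e mod p) = parity_sign (int e) * qr_word_log b (- int e)"
  using power_mod_pos[of e] by (simp add: twisted_qr_word_def dlog_power_mod)

lemma dft_twisted_qr_word:
  "dft (twisted_qr_word b) s =
     (\<Sum>e<p - 1. parity_sign (int e) * qr_word_log b (- int e) * \<omega> ^ ((g ^ e mod p) * s))"
proof -
  have "{..<p} = insert 0 {0<..<p}"
    using p_ge_3 by auto
  then have "dft (twisted_qr_word b) s = (\<Sum>i\<in>{0<..<p}. twisted_qr_word b i * \<omega> ^ (i * s))"
    by (simp add: dft_def twisted_qr_word_def)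
  also have "\<dots> = (\<Sum>e<p - 1. twisted_qr_word b (g ^ e mod p) * \<omega> ^ ((g ^ e mod p) * s))"
    by (rule sum.reindex_bij_betw[OF bij_betw_power_mod, symmetric])
  also have "\<dots> = (\<Sum>e<p - 1. parity_sign (int e) * qr_word_log b (- int e) * \<omega> ^ ((g ^ e mod p) * s))"
    by (intro sum.cong refl) (simp add: twisted_qr_word_power_mod)
  finally show ?thesis .
qed

lemma self_eq_minus_imp_zero: "x = - x \<Longrightarrow> (x::'a) = 0"
  using two_neq_0 by (metis add_eq_0_iff2 mult_2 mult_eq_0_iff)

lemma sum_parity_sign_root_exp_reflect:
  assumes "odd u"
  shows "(\<Sum>e<p - 1. parity_sign (int e) * root_exp (2 * int j - int e) * root_exp (int e + int u)) = 0"
proof -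
  define f where "f x = parity_sign x * root_exp (2 * int j - x) * root_exp (x + int u)" for x
  define c where "c = 2 * int j - int u"
  have periodic: "f (x mod int (p - 1)) = f x" for x
    unfolding f_def
    by (metis (no_types, opaque_lifting) parity_sign_mod_p_minus_1 root_exp_mod_add root_exp_mod
        mod_diff_right_eq)
  \<comment> \<open>The reflection \<open>e \<mapsto> c - e\<close> swaps the two \<open>root_exp\<close> factors and, \<open>u\<close> being odd, flips the sign.\<close>
  have "f (c - int e) = - f (int e)" for e
  proof -
    have "parity_sign c = (- 1 :: 'a)"
      using assms by (simp add: c_def parity_sign_def)
    then have "parity_sign (c - int e) = - (parity_sign (int e) :: 'a)"
      by (simp add: parity_sign_diff)
    moreover have "2 * int j - (c - int e) = int e + int u" and "c - int e + int u = 2 * int j - int e"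
      by (simp_all add: c_def)
    ultimately show ?thesis
      unfolding f_def by (simp only:) (simp add: ac_simps)
  qed
  then have "(\<Sum>e<p - 1. f (int e)) = - (\<Sum>e<p - 1. f (int e))"
    using sum_periodic_reflect[of f "p - 1" c, OF periodic] by (simp add: sum_negf)
  then show ?thesis
    unfolding f_def by (rule self_eq_minus_imp_zero)
qed

lemma dft_twisted_qr_word_nonresidue:
  assumes "odd u"
  shows "dft (twisted_qr_word b) (g ^ u) = 0"
proof -
  have "dft (twisted_qr_word b) (g ^ u) =
      (\<Sum>e<p - 1. parity_sign (int e) * qr_word_log b (- int e) * root_exp (int e + int u))"
    unfolding dft_twisted_qr_word by (simp only: root_exp_add)
  also have "\<dots> = (\<Sum>j<half. b j *
      (\<Sum>e<p - 1. parity_sign (int e) * root_exp (2 * int j - int e) * root_exp (int e + int u)))"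
    by (simp add: qr_word_log_def sum_distrib_left sum_distrib_right algebra_simps sum.swap[of _ "{..<half}"])
  also have "\<dots> = 0"
    using sum_parity_sign_root_exp_reflect[OF assms] by simp
  finally show ?thesis .
qed

lemma dft_twisted_qr_word_0: "dft (twisted_qr_word b) 0 = gauss_sum * qr_word b 0"
proof -
  have gauss_sum_reflect: "(\<Sum>e<p - 1. parity_sign (int e) * root_exp (2 * int j - int e)) = gauss_sum" for j
  proof -
    define f where "f x = parity_sign x * root_exp x" for x
    have "f (x mod int (p - 1)) = f x" for x
      by (simp only: f_def parity_sign_mod_p_minus_1 root_exp_mod)
    then have "(\<Sum>e<p - 1. f (2 * int j - int e)) = gauss_sum"
      unfolding gauss_sum_def f_def[symmetric] by (rule sum_periodic_reflect)
    moreover have "f (2 * int j - int e) = parity_sign (int e) * root_exp (2 * int j - int e)" for e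
      by (simp add: f_def parity_sign_diff parity_sign_def)
    ultimately show ?thesis
      by simp
  qed
  have "dft (twisted_qr_word b) 0 = (\<Sum>e<p - 1. parity_sign (int e) * qr_word_log b (- int e))"
    by (simp add: dft_twisted_qr_word)
  also have "\<dots> = (\<Sum>j<half. b j * (\<Sum>e<p - 1. parity_sign (int e) * root_exp (2 * int j - int e)))"
    by (simp add: qr_word_log_def sum_distrib_left algebra_simps sum.swap[of _ "{..<half}"])
  also have "\<dots> = gauss_sum * qr_word b 0"
    by (simp only: gauss_sum_reflect) (simp add: qr_word_def sum_distrib_left mult.commute)
  finally show ?thesis .
qed

(* The transform of the twisted word vanishes at the non-residues; dilation by g shifts
   exponents by the odd number p - 2, so the transform of the dilate vanishes at the residues. *)
lemma dft_twisted_qr_word_mult_dilated_eq_0: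
  assumes "0 < s" and "s < p"
  shows "dft (twisted_qr_word b) s * dft (\<lambda>j. twisted_qr_word b (g * j mod p)) s = 0"
proof -
  let ?t = "twisted_qr_word b"
  have "s \<in> (\<lambda>e. g ^ e mod p) ` {..<p - 1}"
    using assms bij_betw_power_mod by (simp add: bij_betw_def)
  then obtain u where u: "u < p - 1" "s = g ^ u mod p"
    by auto
  have "dft ?t s = dft ?t (g ^ u)"
    unfolding u(2) by (rule dft_mod)
  moreover have "dft (\<lambda>j. ?t (g * j mod p)) s = dft ?t (g ^ (p - 2 + u))"
  proof -
    have "dft (\<lambda>j. ?t (g * j mod p)) s = dft ?t (g ^ (p - 2) * s mod p)"
      unfolding dft_mod by (rule dft_dilate[OF mult_power_p_minus_2_cong])
    also have "g ^ (p - 2) * s mod p = g ^ (p - 2 + u) mod p"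
      unfolding u(2) by (simp only: mod_mult_right_eq power_add)
    finally show ?thesis
      by (simp only: dft_mod)
  qed
  moreover have "odd u \<or> odd (p - 2 + u)"
    using p_minus_1_eq half_pos by presburger
  ultimately show ?thesis
    using dft_twisted_qr_word_nonresidue[of u b] dft_twisted_qr_word_nonresidue[of "p - 2 + u" b]
    by auto
qed

lemma card_support_twisted_qr_word:
  "card {i \<in> {..<p}. twisted_qr_word b i \<noteq> 0} = card {i \<in> {0<..<p}. qr_word b i \<noteq> 0}"
proof -
  have "{i \<in> {..<p}. twisted_qr_word b i \<noteq> 0} = {i \<in> {0<..<p}. twisted_qr_word b i \<noteq> 0}"
    by (auto simp: twisted_qr_word_def)
  also have "card \<dots> = card {e \<in> {..<p - 1}. twisted_qr_word b (g ^ e mod p) \<noteq> 0}"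
    by (rule card_filter_bij_betw[OF bij_betw_power_mod])
  also have "{e \<in> {..<p - 1}. twisted_qr_word b (g ^ e mod p) \<noteq> 0} =
      {e \<in> {..<p - 1}. qr_word_log b (0 - int e) \<noteq> 0}"
    by (auto simp: twisted_qr_word_power_mod parity_sign_def split: if_splits)
  also have "card \<dots> = card {e \<in> {..<p - 1}. qr_word_log b (int e) \<noteq> 0}"
    by (rule card_periodic_reflect) (simp only: qr_word_log_mod)
  also have "\<dots> = card {i \<in> {0<..<p}. qr_word b i \<noteq> 0}"
    using card_filter_bij_betw[OF bij_betw_power_mod, of "\<lambda>i. qr_word b i \<noteq> 0"]
    by (simp add: qr_word_power_mod)
  finally show ?thesis .
qed

lemma qr_word_square_root_bound_0:
  assumes "qr_word b 0 \<noteq> 0"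
  shows "p \<le> (card {i \<in> {..<p}. qr_word b i \<noteq> 0} - 1) ^ 2"
proof -
  let ?t = "twisted_qr_word b"
  have dilated_0: "dft (\<lambda>j. ?t (g * j mod p)) 0 = dft ?t 0"
    using dft_dilate[OF mult_power_p_minus_2_cong, of ?t 0] by simp
  have "p \<le> card {i \<in> {..<p}. ?t i \<noteq> 0} * card {j \<in> {..<p}. ?t (g * j mod p) \<noteq> 0}"
    by (rule card_supports_mult_ge)
      (use dft_twisted_qr_word_mult_dilated_eq_0 in \<open>auto simp: dilated_0
        dft_twisted_qr_word_0 gauss_sum_neq_0 assms\<close>)
  also have "card {j \<in> {..<p}. ?t (g * j mod p) \<noteq> 0} = card {i \<in> {..<p}. ?t i \<noteq> 0}"
    using coprime p_ge_3 by (intro card_filter_bij_betw[symmetric] bij_betw_mult_mod)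
      (auto simp: coprime_commute)
  also have "card {i \<in> {..<p}. ?t i \<noteq> 0} = card {i \<in> {..<p}. qr_word b i \<noteq> 0} - 1"
  proof -
    have "{i \<in> {..<p}. qr_word b i \<noteq> 0} = insert 0 {i \<in> {0<..<p}. qr_word b i \<noteq> 0}"
      using assms p_ge_3 by auto
    moreover have "finite {i \<in> {0<..<p}. qr_word b i \<noteq> 0}"
      by (rule finite_subset[of _ "{0<..<p}"]) auto
    ultimately show ?thesis
      unfolding card_support_twisted_qr_word by simp
  qed
  finally show ?thesis
    by (simp add: power2_eq_square)
qed

theorem qr_word_square_root_bound:
  assumes "k < p" and "qr_word b k \<noteq> 0"
  shows "p \<le> (card {i \<in> {..<p}. qr_word b i \<noteq> 0} - 1) ^ 2"
proof -
  define b' where "b' j = b j * \<omega> ^ (k * g ^ (2 * j))" for j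
  have "qr_word b' i = qr_word b (i + k)" for i
    by (simp add: qr_word_def b'_def add_mult_distrib power_add ac_simps)
  then have shifted: "qr_word b' i = qr_word b ((i + k) mod p)" for i
    by (simp only: qr_word_mod)
  have "p \<le> (card {i \<in> {..<p}. qr_word b' i \<noteq> 0} - 1) ^ 2"
    using assms by (intro qr_word_square_root_bound_0) (simp add: shifted)
  moreover have "card {i \<in> {..<p}. qr_word b' i \<noteq> 0} = card {i \<in> {..<p}. qr_word b i \<noteq> 0}"
    unfolding shifted using p_ge_3 by (intro card_filter_bij_betw[symmetric] bij_betw_add_mod) simp
  ultimately show ?thesis
    by simp
qed

end

section \<open>The codes C and Cbar\<close>

locale negacyclic_trace_code =
  fixes \<rho> m :: nat and \<theta> :: "'a::{field,finite}"
  assumes prime_rho: "prime \<rho>" and odd_rho: "odd \<rho>" and ord_3: "ord \<rho> 3 = \<rho> - 1"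
    and m_eq: "m = \<rho> - 1" and card_eq: "card (UNIV :: 'a set) = 3 ^ m"
    and theta_power_eq_1_iff: "\<theta> ^ n = 1 \<longleftrightarrow> 4 * \<rho> dvd n"
begin

sublocale odd_prime_primitive_root \<rho> 3
  using prime_rho odd_rho ord_3 by unfold_locales

lemma CHAR_eq_3: "CHAR('a) = 3"
  using card_eq by (rule CHAR_eq_if_card_eq_prime_power) simp

lemma rho_neq_3: "\<rho> \<noteq> 3"
  using coprime by auto

lemma of_nat_rho_neq_0: "(of_nat \<rho> :: 'a) \<noteq> 0"
  using rho_neq_3 prime_rho by (auto simp: of_nat_eq_0_iff_char_dvd CHAR_eq_3 prime_nat_iff)

lemma two_neq_0: "(2::'a) \<noteq> 0"
  using of_nat_eq_0_iff_char_dvd[of 2, where 'a = 'a] by (simp add: CHAR_eq_3)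

lemma theta_power_2rho: "\<theta> ^ (2 * \<rho>) = - 1"
proof -
  have "(\<theta> ^ (2 * \<rho>))\<^sup>2 = \<theta> ^ (4 * \<rho>)"
    by (simp only: power_mult[symmetric]) simp
  then have "(\<theta> ^ (2 * \<rho>))\<^sup>2 = 1"
    using theta_power_eq_1_iff by simp
  moreover have "\<theta> ^ (2 * \<rho>) \<noteq> 1"
    using theta_power_eq_1_iff[of "2 * \<rho>"] p_ge_3 by (auto dest: dvd_imp_le)
  ultimately show ?thesis
    by (simp add: power2_eq_1_iff)
qed

lemma omega_power_rho: "(- (\<theta> ^ 2)) ^ \<rho> = 1"
  using odd_rho theta_power_2rho by (simp add: power_minus_odd power_mult[symmetric])

lemma omega_neq_1: "- (\<theta> ^ 2) \<noteq> 1"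
proof
  assume "- (\<theta> ^ 2) = 1"
  then have "\<theta> ^ 2 = - 1"
    by (simp add: minus_equation_iff)
  moreover have "\<theta> ^ 4 = (\<theta> ^ 2) ^ 2"
    by (simp flip: power_mult)
  ultimately have "\<theta> ^ 4 = 1"
    by simp
  then show False
    using theta_power_eq_1_iff[of 4] p_ge_3 by (auto dest: dvd_imp_le)
qed

sublocale qr_words \<rho> 3 "- (\<theta> ^ 2)"
  using prime_rho omega_power_rho omega_neq_1 two_neq_0 of_nat_rho_neq_0 by unfold_locales

definition \<iota> :: 'a where "\<iota> = \<theta> ^ \<rho>"

lemma iota_mult_self: "\<iota> * \<iota> = - 1"
  using theta_power_2rho by (simp add: \<iota>_def power_add[symmetric] mult_2)

lemma iota_neq_0: "\<iota> \<noteq> 0"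
  using iota_mult_self by auto

lemma iota_power_9: "\<iota> ^ 9 = \<iota>"
proof -
  have "\<iota> ^ 9 = (\<iota> * \<iota>) * (\<iota> * \<iota>) * (\<iota> * \<iota>) * (\<iota> * \<iota>) * \<iota>"
    by (simp add: numeral_eq_Suc ac_simps)
  then show ?thesis
    by (simp add: iota_mult_self)
qed

lemma m_div_2: "m div 2 = half"
  by (simp add: m_eq half_def)

lemma m_eq_half_2: "m = half * 2"
  using p_minus_1_eq m_eq by simp

lemma ftrace_3_diff: "ftrace 3 n (x - y) = ftrace 3 n x - ftrace 3 n (y :: 'a)"
  by (rule ftrace_diff[where k = 1]) (simp_all add: CHAR_eq_3)

lemma ftrace_9_diff: "ftrace 9 n (x - y) = ftrace 9 n x - ftrace 9 n (y :: 'a)"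
  by (rule ftrace_diff[where k = 2]) (simp_all add: CHAR_eq_3)

lemma ftrace_3_eq_ftrace_9: "ftrace 3 m (x :: 'a) = ftrace 9 half x + ftrace 9 half x ^ 3"
proof -
  have "ftrace 3 (half * 2) x = ftrace 3 2 (ftrace (3 ^ 2) half x)"
    by (rule ftrace_tower[where e = 1]) (simp_all add: CHAR_eq_3)
  then have "ftrace 3 m x = ftrace 3 2 (ftrace 9 half x)"
    by (simp add: m_eq_half_2)
  also have "ftrace 3 2 y = y + y ^ 3" for y :: 'a
    by (simp add: ftrace_def numeral_2_eq_2)
  finally show ?thesis .
qed

lemma ftrace_9_iota_power_mult: "ftrace 9 half (\<iota> ^ k * y) = \<iota> ^ k * ftrace 9 half y"
proof (rule ftrace_mult_fixed)
  have "(\<iota> ^ k) ^ 9 = (\<iota> ^ 9) ^ k"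
    by (simp only: power_mult[symmetric] mult.commute)
  then show "(\<iota> ^ k) ^ 9 = \<iota> ^ k"
    by (simp add: iota_power_9)
qed

lemma ftrace_9_eq_0_if_ftrace_3_eq_0:
  assumes "ftrace 3 m y = 0" and "ftrace 3 m (\<iota> * y) = 0"
  shows "ftrace 9 half y = 0"
proof -
  define t where "t = ftrace 9 half y"
  have "t + t ^ 3 = 0"
    using assms(1) by (simp add: t_def ftrace_3_eq_ftrace_9)
  moreover have "\<iota> * t + (\<iota> * t) ^ 3 = 0"
    using assms(2) ftrace_9_iota_power_mult[of 1 y] by (simp add: t_def ftrace_3_eq_ftrace_9)
  then have "\<iota> * (t - t ^ 3) = 0"
    using iota_mult_self by (simp add: power_mult_distrib power3_eq_cube algebra_simps)
  then have "t - t ^ 3 = 0"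
    using iota_neq_0 by simp
  ultimately have "2 * t = 0"
    by (simp add: algebra_simps mult_2)
  then show ?thesis
    using two_neq_0 by (simp add: t_def)
qed

lemma theta_power_mod_rho: "\<theta> ^ i = \<iota> ^ (i div \<rho>) * \<theta> ^ (i mod \<rho>)"
proof -
  have "\<theta> ^ i = \<theta> ^ (\<rho> * (i div \<rho>) + i mod \<rho>)"
    by simp
  then show ?thesis
    by (simp only: \<iota>_def power_add power_mult)
qed

lemma ftrace_9_theta_power_neq_0_iff:
  "ftrace 9 half (d * \<theta> ^ i) \<noteq> 0 \<longleftrightarrow> ftrace 9 half (d * \<theta> ^ (i mod \<rho>)) \<noteq> 0"
proof -
  have "d * \<theta> ^ i = \<iota> ^ (i div \<rho>) * (d * \<theta> ^ (i mod \<rho>))"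
    by (simp only: theta_power_mod_rho[of i] ac_simps)
  then have "ftrace 9 half (d * \<theta> ^ i) = \<iota> ^ (i div \<rho>) * ftrace 9 half (d * \<theta> ^ (i mod \<rho>))"
    by (simp only: ftrace_9_iota_power_mult)
  then show ?thesis
    using iota_neq_0 by simp
qed

lemma ftrace_9_theta_power_2: "ftrace 9 half (a * \<theta> ^ (2 * i)) = (- 1) ^ i * qr_word (\<lambda>j. a ^ (9 ^ j)) i"
proof -
  have "(- (\<theta> ^ 2)) ^ i = (- 1) ^ i * \<theta> ^ (2 * i)"
    by (simp add: power_minus[of "\<theta> ^ 2"] power_mult)
  then have "\<theta> ^ (2 * i) = (- 1) ^ i * (- (\<theta> ^ 2)) ^ i"
    by (simp add: mult.assoc[symmetric] power_mult_distrib[symmetric])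
  moreover have "((- 1 :: 'a) ^ i) ^ 9 = ((- 1) ^ 9) ^ i"
    by (simp only: power_mult[symmetric] mult.commute)
  ultimately have "ftrace 9 half (a * \<theta> ^ (2 * i)) = (- 1) ^ i * ftrace 9 half (a * (- (\<theta> ^ 2)) ^ i)"
    using ftrace_mult_fixed[of "(- 1) ^ i" 9 half "a * (- (\<theta> ^ 2)) ^ i"] by (simp add: ac_simps)
  also have "ftrace 9 half (a * (- (\<theta> ^ 2)) ^ i) = qr_word (\<lambda>j. a ^ (9 ^ j)) i"
  proof -
    have "(3::nat) ^ (2 * j) = 9 ^ j" for j
      by (simp add: power_mult)
    then show ?thesis
      unfolding ftrace_def qr_word_def
      by (intro sum.cong refl) (simp add: power_mult_distrib power_mult[symmetric] mult.commute)
  qed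
  finally show ?thesis .
qed

definition c_word :: "'a \<Rightarrow> 'a list" where
  "c_word a = map (\<lambda>i. ftrace 3 m (a * \<theta> ^ i)) [0..<2 * \<rho>]"

definition cbar_word :: "'a \<Rightarrow> 'a list" where
  "cbar_word a = map (\<lambda>i. ftrace 9 (m div 2) (a * \<theta> ^ (2 * i))) [0..<\<rho>]"

lemma hamming_dist_c_word:
  "hamming_dist (c_word a) (c_word a') = card {i \<in> {..<2 * \<rho>}. ftrace 3 m ((a - a') * \<theta> ^ i) \<noteq> 0}"
  unfolding c_word_def hamming_dist_map_upt
  by (simp add: ftrace_3_diff left_diff_distrib)

lemma hamming_dist_cbar_word:
  "hamming_dist (cbar_word a) (cbar_word a') = card {i \<in> {..<\<rho>}. ftrace 9 half ((a - a') * \<theta> ^ (2 * i)) \<noteq> 0}"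
  unfolding cbar_word_def hamming_dist_map_upt m_div_2
  by (simp add: ftrace_9_diff left_diff_distrib)

lemma theta_power_power_3_neq:
  assumes "0 < k" and "k < m"
  shows "\<theta> ^ (3 ^ k) \<noteq> \<theta>"
proof
  assume "\<theta> ^ (3 ^ k) = \<theta>"
  moreover have "\<theta> \<noteq> 0"
    using theta_power_eq_1_iff[of "4 * \<rho>"] p_ge_3 by (auto simp: power_0_left)
  moreover have "\<theta> ^ (3 ^ k) = \<theta> * \<theta> ^ (3 ^ k - 1)"
    by (simp flip: power_Suc)
  ultimately have "\<theta> ^ (3 ^ k - 1) = 1"
    by simp
  then have "\<rho> dvd 3 ^ k - 1"
    using theta_power_eq_1_iff by (auto dest: dvd_mult_right)
  then have "3 ^ k mod \<rho> = 3 ^ 0 mod \<rho>"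
    using mod_eq_dvd_iff_nat[of 1 "3 ^ k" \<rho>] by simp
  then have "k mod (\<rho> - 1) = 0"
    by (simp only: power_mod_eq_iff) simp
  then show False
    using assms m_eq by simp
qed

lemma c_word_inj: "inj c_word"
proof (rule injI)
  fix a a' assume eq: "c_word a = c_word a'"
  have "ftrace 3 m (a * \<theta> ^ i) = ftrace 3 m (a' * \<theta> ^ i)" if "i < 2 * \<rho>" for i
    using arg_cong[OF eq, of "\<lambda>w. w ! i"] that by (simp add: c_word_def)
  then have "ftrace 3 m ((a - a') * \<theta> ^ i) = 0" if "i < m" for i
    using that m_eq by (simp add: ftrace_3_diff left_diff_distrib)
  moreover note theta_power_power_3_neq
  moreover have "0 < m"
    using m_eq p_ge_3 by simp
  ultimately have "a - a' = 0"
    by (rule eq_0_if_ftrace_mult_powers_eq_0)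
  then show "a = a'"
    by simp
qed

lemma card_ftrace_9_theta_power_2:
  "card {i \<in> {..<\<rho>}. ftrace 9 half (d * \<theta> ^ (2 * i)) \<noteq> 0} =
     card {i \<in> {..<\<rho>}. ftrace 9 half (d * \<theta> ^ i) \<noteq> 0}"
proof -
  have "bij_betw (\<lambda>i. 2 * i mod \<rho>) {..<\<rho>} {..<\<rho>}"
    using odd_rho p_ge_3 by (intro bij_betw_mult_mod) (simp_all add: coprime_left_2_iff_odd)
  then have "card {i \<in> {..<\<rho>}. ftrace 9 half (d * \<theta> ^ i) \<noteq> 0} =
      card {i \<in> {..<\<rho>}. ftrace 9 half (d * \<theta> ^ (2 * i mod \<rho>)) \<noteq> 0}"
    by (rule card_filter_bij_betw)
  then show ?thesis
    by (simp only: ftrace_9_theta_power_neq_0_iff[of d "2 * _", symmetric])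
qed

lemma card_ftrace_9_le_card_ftrace_3:
  "card {i \<in> {..<\<rho>}. ftrace 9 half (d * \<theta> ^ i) \<noteq> 0} \<le>
     card {i \<in> {..<2 * \<rho>}. ftrace 3 m (d * \<theta> ^ i) \<noteq> 0}"
proof (rule card_inj_on_le)
  define f where "f i = (if ftrace 3 m (d * \<theta> ^ i) \<noteq> 0 then i else i + \<rho>)" for i
  have f_mod: "f i mod \<rho> = i" if "i < \<rho>" for i
    using that by (simp add: f_def)
  show "inj_on f {i \<in> {..<\<rho>}. ftrace 9 half (d * \<theta> ^ i) \<noteq> 0}"
    by (rule inj_onI) (metis (no_types, lifting) f_mod lessThan_iff mem_Collect_eq)
  show "f ` {i \<in> {..<\<rho>}. ftrace 9 half (d * \<theta> ^ i) \<noteq> 0} \<subseteq>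
      {i \<in> {..<2 * \<rho>}. ftrace 3 m (d * \<theta> ^ i) \<noteq> 0}"
  proof (rule image_subsetI)
    fix i assume "i \<in> {i \<in> {..<\<rho>}. ftrace 9 half (d * \<theta> ^ i) \<noteq> 0}"
    then have i: "i < \<rho>" "ftrace 9 half (d * \<theta> ^ i) \<noteq> 0"
      by simp_all
    have "d * \<theta> ^ (i + \<rho>) = \<iota> * (d * \<theta> ^ i)"
      by (simp add: \<iota>_def power_add ac_simps)
    then have "ftrace 3 m (d * \<theta> ^ (i + \<rho>)) = ftrace 3 m (\<iota> * (d * \<theta> ^ i))"
      by (rule arg_cong)
    then have "ftrace 3 m (d * \<theta> ^ i) \<noteq> 0 \<or> ftrace 3 m (d * \<theta> ^ (i + \<rho>)) \<noteq> 0"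
      using ftrace_9_eq_0_if_ftrace_3_eq_0[of "d * \<theta> ^ i"] i(2) by auto
    with i(1) show "f i \<in> {i \<in> {..<2 * \<rho>}. ftrace 3 m (d * \<theta> ^ i) \<noteq> 0}"
      by (auto simp: f_def)
  qed
qed simp

lemma ftrace_3_eq_0_if_ftrace_9_eq_0:
  assumes "\<And>i. i < \<rho> \<Longrightarrow> ftrace 9 half (d * \<theta> ^ i) = 0"
  shows "ftrace 3 m (d * \<theta> ^ i) = 0"
proof -
  have "ftrace 9 half (d * \<theta> ^ i) = 0"
    using assms[of "i mod \<rho>"] ftrace_9_theta_power_neq_0_iff[of d i] p_ge_3 by simp
  then show ?thesis
    by (simp add: ftrace_3_eq_ftrace_9)
qed

lemma cbar_word_dominated_by_c_word:
  assumes "c_word a \<noteq> c_word a'"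
  shows "cbar_word (a - a') \<noteq> cbar_word 0"
    and "hamming_dist (cbar_word (a - a')) (cbar_word 0) \<le> hamming_dist (c_word a) (c_word a')"
proof -
  have weight_cbar: "hamming_dist (cbar_word (a - a')) (cbar_word 0) =
      card {i \<in> {..<\<rho>}. ftrace 9 half ((a - a') * \<theta> ^ i) \<noteq> 0}"
    unfolding hamming_dist_cbar_word diff_zero by (rule card_ftrace_9_theta_power_2)
  then show "hamming_dist (cbar_word (a - a')) (cbar_word 0) \<le> hamming_dist (c_word a) (c_word a')"
    using card_ftrace_9_le_card_ftrace_3[of "a - a'"] unfolding hamming_dist_c_word by simp
  show "cbar_word (a - a') \<noteq> cbar_word 0"
  proof
    assume "cbar_word (a - a') = cbar_word 0"
    then have "hamming_dist (cbar_word (a - a')) (cbar_word 0) = 0"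
      by (simp add: hamming_dist_def)
    then have "card {i \<in> {..<\<rho>}. ftrace 9 half ((a - a') * \<theta> ^ i) \<noteq> 0} = 0"
      by (simp only: weight_cbar)
    then have "ftrace 3 m ((a - a') * \<theta> ^ i) = 0" for i
      by (intro ftrace_3_eq_0_if_ftrace_9_eq_0) auto
    then have "hamming_dist (c_word a) (c_word a') = 0"
      by (simp add: hamming_dist_c_word)
    then show False
      using assms by (simp add: hamming_dist_eq_0_iff c_word_def)
  qed
qed

lemma hamming_dist_cbar_word_ge:
  assumes "cbar_word a \<noteq> cbar_word a'"
  shows "sqrt \<rho> + 1 \<le> real (hamming_dist (cbar_word a) (cbar_word a'))"
proof -
  define b where "b = (\<lambda>j. (a - a') ^ (9 ^ j))"
  define w where "w = hamming_dist (cbar_word a) (cbar_word a')"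
  have w_eq: "w = card {i \<in> {..<\<rho>}. qr_word b i \<noteq> 0}"
    by (simp add: w_def b_def hamming_dist_cbar_word ftrace_9_theta_power_2)
  have "w \<noteq> 0"
    using assms by (simp add: w_def hamming_dist_eq_0_iff cbar_word_def)
  then have "{i \<in> {..<\<rho>}. qr_word b i \<noteq> 0} \<noteq> {}"
    unfolding w_eq by auto
  then obtain k where "k < \<rho>" "qr_word b k \<noteq> 0"
    by auto
  then have "\<rho> \<le> (w - 1) ^ 2"
    unfolding w_eq by (rule qr_word_square_root_bound)
  moreover have "real ((w - 1) ^ 2) = (real w - 1) ^ 2"
    using \<open>w \<noteq> 0\<close> by (simp add: of_nat_diff)
  ultimately have "sqrt \<rho> \<le> sqrt ((real w - 1) ^ 2)"
    by (metis of_nat_le_iff real_sqrt_le_mono)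
  also have "\<dots> = real w - 1"
    using \<open>w \<noteq> 0\<close> by simp
  finally show ?thesis
    by (simp add: w_def)
qed

lemma card_range_c_word: "card (range c_word) = 3 ^ m"
  using c_word_inj card_eq by (simp add: card_image)

lemma min_distance_range_cbar_word_le: "min_distance (range cbar_word) \<le> min_distance (range c_word)"
proof -
  have distinct: "c_word 1 \<noteq> c_word 0"
    using c_word_inj by (simp add: inj_eq)
  obtain c c' where "c \<in> range c_word" "c' \<in> range c_word" "c \<noteq> c'"
    and "min_distance (range c_word) = hamming_dist c c'"
    by (rule min_distance_attained[of "range c_word" "c_word 1" "c_word 0"]) (use distinct in auto)
  then obtain a a' where "c_word a \<noteq> c_word a'"
    and min_c: "min_distance (range c_word) = hamming_dist (c_word a) (c_word a')"
    by auto
  then have "min_distance (range cbar_word) \<le> hamming_dist (cbar_word (a - a')) (cbar_word 0)"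
    by (intro min_distance_le cbar_word_dominated_by_c_word) simp_all
  also have "\<dots> \<le> min_distance (range c_word)"
    unfolding min_c using \<open>c_word a \<noteq> c_word a'\<close> by (rule cbar_word_dominated_by_c_word)
  finally show ?thesis .
qed

lemma min_distance_range_cbar_word_ge: "sqrt \<rho> + 1 \<le> real (min_distance (range cbar_word))"
proof -
  have distinct: "cbar_word 1 \<noteq> cbar_word 0"
    using cbar_word_dominated_by_c_word(1)[of 1 0] c_word_inj by (simp add: inj_eq)
  obtain c c' where "c \<in> range cbar_word" "c' \<in> range cbar_word" "c \<noteq> c'"
    and "min_distance (range cbar_word) = hamming_dist c c'"
    by (rule min_distance_attained[of "range cbar_word" "cbar_word 1" "cbar_word 0"]) (use distinct in auto)
  then obtain a a' where "cbar_word a \<noteq> cbar_word a'"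
    and "min_distance (range cbar_word) = hamming_dist (cbar_word a) (cbar_word a')"
    by auto
  then show ?thesis
    using hamming_dist_cbar_word_ge by simp
qed

end

theorem theorem11:
  fixes \<rho> :: nat and \<alpha> :: "'a::{field,finite}"
    and m :: nat and \<beta> \<theta> :: 'a and C Cbar :: "'a list set"
  assumes "prime \<rho>" and "odd \<rho>"
    and "[\<rho> = 5] (mod 12) \<or> [\<rho> = 7] (mod 12)"
    and "ord \<rho> 3 = \<rho> - 1"
    and m_def: "m = \<rho> - 1"
    and "card (UNIV :: 'a set) = 3 ^ m"
    and "primitive_element \<alpha>"
    and \<beta>_def: "\<beta> = \<alpha> ^ ((3 ^ m - 1) div (4 * \<rho>))"
    and \<theta>_def: "\<theta> = inverse \<beta>"
    and C_def: "C = {map (\<lambda>i. ftrace 3 m (a * \<theta> ^ i)) [0..<2 * \<rho>] | a. True}"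
    and Cbar_def: "Cbar = {map (\<lambda>i. ftrace 9 (m div 2) (a * \<theta> ^ (2 * i))) [0..<\<rho>] | a. True}"
  shows "card C = 3 ^ (\<rho> - 1)
    \<and> min_distance C \<ge> min_distance Cbar
    \<and> real (min_distance Cbar) \<ge> sqrt (real \<rho>) + 1"
proof -
  interpret odd_prime_primitive_root \<rho> 3
    using assms(1,2,4) by unfold_locales
  have "card (UNIV :: 'a set) - 1 = 4 * \<rho> * ((3 ^ m - 1) div (4 * \<rho>))"
    using four_mul_dvd_power_minus_1 assms(6) m_def by simp
  then have "\<theta> ^ n = 1 \<longleftrightarrow> 4 * \<rho> dvd n" for n
    using primitive_element_power_power_eq_1_iff[OF assms(7)]
    by (simp add: \<theta>_def \<beta>_def power_inverse)
  then interpret negacyclic_trace_code \<rho> m \<theta>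
    using assms(1,2,4,6) m_def by unfold_locales
  have "C = range c_word" and "Cbar = range cbar_word"
    by (auto simp: C_def Cbar_def c_word_def cbar_word_def)
  then show ?thesis
    using card_range_c_word min_distance_range_cbar_word_le min_distance_range_cbar_word_ge m_def
    by simp
qed

end
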